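(* For any fixed $m$, any fixed $k<m$ and any fixed $p\in(0,1)$, with $P\sim(\mathrm{IC}_p)^n$, $$\Pr(\mathrm{CORE}(P)=\mathcal A_k)=1-\exp(-\Theta(n))\quad\text{and}\quad\Pr(\mathrm{EJR{+}}(P)=\mathcal A_k)=1-\exp(-\Theta(n)).$$
   Context: $\mathcal A=[m]$, $\mathcal A_k$ the $k$-subsets. $\mathrm{IC}_p$ is the distribution over $2^{\mathcal A}$ in which each alternative is independently included with probability $p$; $P=(A_1,\dots,A_n)$ has i.i.d. ballots from $\mathrm{IC}_p$. $W\in\mathrm{CORE}(P)$ iff for every nonempty $N'\subseteq[n]$ and $W'\subseteq\mathcal A$ with $|W'|/k\le|N'|/n$ some $j\in N'$ has $|A_j\cap W'|\le|A_j\cap W|$. $W\in\mathrm{EJR{+}}(P)$ iff there are no $a\in\mathcal A\setminus W$, $\ell\ge1$, $N'\subseteq[n]$ with $|N'|\ge\ell n/k$ such that every $j\in N'$ has $a\in A_j$ and $|A_j\cap W|<\ell$. Asymptotics as $n\to\infty$. *)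

theory Defs
  imports "HOL-Probability.Probability"
begin

text \<open>Alternatives: [m] = {1..m}. Voters: [n], indexed as {0..<n}.
  A profile is a function from voters to ballots (approval sets).\<close>

definition alts :: "nat \<Rightarrow> nat set" where
  "alts m = {1..m}"

definition committees :: "nat \<Rightarrow> nat \<Rightarrow> nat set set" where
  "committees m k = {W. W \<subseteq> alts m \<and> card W = k}"

definition IC :: "real \<Rightarrow> nat \<Rightarrow> nat set pmf" where
  "IC p m = map_pmf (\<lambda>f. {a \<in> alts m. f a}) (Pi_pmf (alts m) False (\<lambda>_. bernoulli_pmf p))"

definition profile_pmf :: "real \<Rightarrow> nat \<Rightarrow> nat \<Rightarrow> (nat \<Rightarrow> nat set) pmf" where
  "profile_pmf p m n = Pi_pmf {..<n} {} (\<lambda>_. IC p m)"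

definition CORE :: "nat \<Rightarrow> nat \<Rightarrow> nat \<Rightarrow> (nat \<Rightarrow> nat set) \<Rightarrow> nat set set" where
  "CORE m k n P = {W \<in> committees m k.
     \<forall>N' W'. N' \<subseteq> {..<n} \<longrightarrow> N' \<noteq> {} \<longrightarrow> W' \<subseteq> alts m \<longrightarrow>
       real (card W') / real k \<le> real (card N') / real n \<longrightarrow>
       (\<exists>j\<in>N'. card (P j \<inter> W') \<le> card (P j \<inter> W))}"

definition EJR_plus :: "nat \<Rightarrow> nat \<Rightarrow> nat \<Rightarrow> (nat \<Rightarrow> nat set) \<Rightarrow> nat set set" where
  "EJR_plus m k n P = {W \<in> committees m k.
     \<not> (\<exists>a \<in> alts m - W. \<exists>l::nat. l \<ge> 1 \<and> (\<exists>N' \<subseteq> {..<n}.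
          real (card N') \<ge> real l * real n / real k \<and>
          (\<forall>j\<in>N'. a \<in> P j \<and> card (P j \<inter> W) < l)))}"

end

(*
  If some committee W of size k fails CORE (resp. EJR+), this is witnessed by a
  deviating set W' with |W'| <= k (resp. an alternative a outside W and a level l)
  that is supported by at least a |W'|/k (resp. l/k) fraction of the voters.  Under
  IC_p a single ballot supports a fixed witness with probability strictly below that
  fraction, by exchangeability of the alternatives; Hoeffding's inequality and a
  union bound over the finitely many witnesses then bound the failure probability by
  exp(-cn).  Conversely, with probability (p(1-p)^(m-1))^n every voter approves
  exactly {1}, and then the committee {2..k+1} violates both properties.
*)

theory Submission
  imports Defs "HOL-Real_Asymp.Real_Asymp"
begin

section \<open>Double counting, permutations and blocks\<close>

lemma card_mult_prob_le_overlap: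
  fixes M :: "'a pmf" and F :: "'i \<Rightarrow> 'a set"
  assumes "finite I" and "\<And>i. i \<in> I \<Longrightarrow> measure_pmf.prob M (F i) = \<mu>"
    and "\<And>x. card {i \<in> I. x \<in> F i} \<le> L"
  shows "real (card I) * \<mu> \<le> real L"
proof -
  have "real (card I) * \<mu> = (\<Sum>i\<in>I. measure_pmf.expectation M (indicator (F i)))"
    using assms(2) by simp
  also have "\<dots> = measure_pmf.expectation M (\<lambda>x. \<Sum>i\<in>I. indicator (F i) x)"
    by (rule Bochner_Integration.integral_sum[symmetric])
       (auto intro!: measure_pmf.integrable_const_bound[where B=1] simp: indicator_def)
  also have "\<dots> = measure_pmf.expectation M (\<lambda>x. real (card {i \<in> I. x \<in> F i}))"
    using assms(1) by (simp add: indicator_def sum.If_cases Int_def)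
  also have "\<dots> \<le> real L"
    by (rule measure_pmf.integral_le_const)
       (auto intro!: measure_pmf.integrable_const_bound[where B="real L"] simp: assms(3))
  finally show ?thesis .
qed

lemma card_Int_image_inj:
  assumes "inj \<sigma>"
  shows "card (\<sigma> ` A \<inter> \<sigma> ` B) = card (A \<inter> B)"
  using assms by (simp add: image_Int[symmetric] card_image inj_on_subset)

lemma exists_permutes_swapping:
  assumes "finite D" "finite B" "D \<inter> B = {}" "card D = card B"
  obtains \<sigma> where "\<sigma> permutes D \<union> B" "\<sigma> ` D = B" "\<sigma> ` B = D"
proof -
  obtain h where h: "bij_betw h D B"
    using finite_same_card_bij[OF assms(1,2,4)] by blast
  define \<sigma> where "\<sigma> x = (if x \<in> D then h x else if x \<in> B then inv_into D h x else x)" for x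
  have "bij_betw \<sigma> D B"
    using h by (rule bij_betw_cong[THEN iffD1, rotated]) (simp add: \<sigma>_def)
  moreover have "bij_betw \<sigma> B D"
    using bij_betw_inv_into[OF h]
    by (rule bij_betw_cong[THEN iffD1, rotated]) (use assms(3) in \<open>auto simp: \<sigma>_def\<close>)
  ultimately have "bij_betw \<sigma> (D \<union> B) (B \<union> D)"
    using assms(3) by (intro bij_betw_combine) auto
  then have "\<sigma> permutes D \<union> B"
    by (auto simp: permutes_altdef \<sigma>_def Un_commute)
  with \<open>bij_betw \<sigma> D B\<close> \<open>bij_betw \<sigma> B D\<close> show ?thesis
    by (intro that) (auto simp: bij_betw_def)
qed

lemma exists_disjoint_blocks:
  assumes "finite E" "q * s \<le> card E"
  obtains C where "disjoint_family_on C {..<q}" "\<And>i. i < q \<Longrightarrow> C i \<subseteq> E \<and> card (C i) = s"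
proof -
  have "\<exists>C. disjoint_family_on C {..<q} \<and> (\<forall>i<q. C i \<subseteq> E \<and> card (C i) = s)"
    using assms
  proof (induction q arbitrary: E)
    case (Suc q)
    obtain X where X: "X \<subseteq> E" "card X = s"
      using Suc.prems by (metis obtain_subset_with_card_n le_add1 mult_Suc order_trans)
    have "q * s \<le> card (E - X)"
      using Suc.prems X by (simp add: card_Diff_subset finite_subset)
    then obtain C where C: "disjoint_family_on C {..<q}" "\<forall>i<q. C i \<subseteq> E - X \<and> card (C i) = s"
      using Suc.IH[of "E - X"] Suc.prems(1) by auto
    have "disjoint_family_on (C(q := X)) (insert q {..<q})"
      using C by (auto simp: disjoint_family_on_insert disjoint_family_on_def)
    moreover have "\<forall>i<Suc q. (C(q := X)) i \<subseteq> E \<and> card ((C(q := X)) i) = s"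
      using C X by (auto simp: less_Suc_eq)
    ultimately show ?case
      by (metis lessThan_Suc)
  qed (auto simp: disjoint_family_on_def)
  then show ?thesis
    using that by blast
qed

lemma card_Int_less_iff_Diff:
  assumes "finite W" "finite W'"
  shows "card (A \<inter> W) < card (A \<inter> W') \<longleftrightarrow> card (A \<inter> (W - W')) < card (A \<inter> (W' - W))"
proof -
  have "card (A \<inter> W) = card (A \<inter> W \<inter> W') + card (A \<inter> (W - W'))"
    "card (A \<inter> W') = card (A \<inter> W \<inter> W') + card (A \<inter> (W' - W))"
    using assms by (simp_all add: card_Int_Diff[of "A \<inter> W" W'] card_Int_Diff[of "A \<inter> W'" W]
        Int_Diff Int_commute Int_left_commute)
  then show ?thesis
    by linarith
qed

lemma one_div_Suc_div_less:
  assumes "0 < s" "s \<le> r"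
  shows "1 / real (r div s + 1) < real s / real r"
proof -
  have "r < r div s * s + s"
    using mod_less_divisor[OF assms(1), of r] div_mult_mod_eq[of r s] by linarith
  then have "r < (r div s + 1) * s"
    by simp
  then have "real r < real (r div s + 1) * real s"
    by (simp only: of_nat_mult[symmetric] of_nat_less_iff)
  moreover have "0 < real r"
    using assms by simp
  ultimately show ?thesis
    by (simp add: field_simps)
qed

definition strict_winner :: "('j \<Rightarrow> 'a set) \<Rightarrow> 'j set \<Rightarrow> 'a set \<Rightarrow> 'j \<Rightarrow> bool" where
  "strict_winner B J A i \<longleftrightarrow> (\<forall>j \<in> J - {i}. card (A \<inter> B j) < card (A \<inter> B i))"

lemma strict_winner_unique:
  assumes "strict_winner B J A i" "strict_winner B J A i'" "i \<in> J" "i' \<in> J"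
  shows "i = i'"
proof (rule ccontr)
  assume "i \<noteq> i'"
  then have "card (A \<inter> B i') < card (A \<inter> B i)" "card (A \<inter> B i) < card (A \<inter> B i')"
    using assms by (auto simp: strict_winner_def)
  then show False
    by simp
qed

lemma strict_winner_image_iff:
  assumes "inj \<sigma>" "\<tau> permutes J" "i \<in> J" "\<And>j. j \<in> J \<Longrightarrow> \<sigma> ` B j = B (\<tau> j)"
  shows "strict_winner B J (\<sigma> ` A) (\<tau> i) \<longleftrightarrow> strict_winner B J A i"
proof -
  have card_image: "card (\<sigma> ` A \<inter> B (\<tau> j)) = card (A \<inter> B j)" if "j \<in> J" for j
    using card_Int_image_inj[OF assms(1), of A "B j"] assms(4)[OF that] by simp
  have "J - {\<tau> i} = \<tau> ` (J - {i})"
    using assms(2) by (simp add: image_set_diff permutes_inj permutes_image)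
  then have "strict_winner B J (\<sigma> ` A) (\<tau> i)
      \<longleftrightarrow> (\<forall>j \<in> J - {i}. card (\<sigma> ` A \<inter> B (\<tau> j)) < card (\<sigma> ` A \<inter> B (\<tau> i)))"
    unfolding strict_winner_def by (simp only: Set.ball_simps(9))
  then show ?thesis
    using assms(3) by (simp add: strict_winner_def card_image)
qed

section \<open>Concentration of counts of independent trials\<close>

lemma map_pmf_eq_bernoulli_pmf:
  fixes M :: "'a pmf" and Q :: "'a \<Rightarrow> bool"
  shows "map_pmf Q M = bernoulli_pmf (measure_pmf.prob M {x. Q x})"
proof (rule pmf_eqI)
  fix b :: bool
  have "pmf (map_pmf Q M) True = measure_pmf.prob M {x. Q x}"
    by (simp add: pmf_map vimage_def)
  then show "pmf (map_pmf Q M) b = pmf (bernoulli_pmf (measure_pmf.prob M {x. Q x})) b"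
    by (cases b) (simp_all add: pmf_False_conv_True)
qed

lemma prob_Pi_pmf_count_ge_le:
  fixes M :: "'a pmf" and Q :: "'a \<Rightarrow> bool"
  defines "\<mu> \<equiv> measure_pmf.prob M {x. Q x}"
  assumes n: "0 < n" and \<beta>: "\<mu> \<le> \<beta>"
  shows "measure_pmf.prob (Pi_pmf {..<n} d (\<lambda>_. M))
           {P. \<beta> * real n \<le> real (card {j \<in> {..<n}. Q (P j)})}
         \<le> exp (- 2 * real n * (\<beta> - \<mu>)\<^sup>2)"
proof -
  have \<mu>: "\<mu> \<in> {0..1}"
    by (simp add: \<mu>_def)
  have "map_pmf (\<lambda>f. card {j \<in> {..<n}. f j}) (map_pmf ((\<circ>) Q) (Pi_pmf {..<n} d (\<lambda>_. M)))
      = map_pmf (\<lambda>f. card {j \<in> {..<n}. f j}) (Pi_pmf {..<n} (Q d) (\<lambda>_. bernoulli_pmf \<mu>))"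
    by (simp add: Pi_pmf_map[symmetric] map_pmf_eq_bernoulli_pmf \<mu>_def)
  also have "\<dots> = binomial_pmf n \<mu>"
    using \<mu> by (intro binomial_pmf_altdef'[symmetric]) auto
  finally have binomial:
    "map_pmf (\<lambda>P. card {j \<in> {..<n}. Q (P j)}) (Pi_pmf {..<n} d (\<lambda>_. M)) = binomial_pmf n \<mu>"
    by (simp add: pmf.map_comp o_def)
  have "measure_pmf.prob (Pi_pmf {..<n} d (\<lambda>_. M))
        {P. \<beta> * real n \<le> real (card {j \<in> {..<n}. Q (P j)})}
      = measure_pmf.prob (binomial_pmf n \<mu>) {k. \<beta> * real n \<le> real k}"
    by (simp add: binomial[symmetric] vimage_def)
  also have "{k. \<beta> * real n \<le> real k} = {k. \<mu> + (\<beta> - \<mu>) \<le> real k / real n}"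
    using n by (auto simp: field_simps)
  also have "measure_pmf.prob (binomial_pmf n \<mu>) \<dots> \<le> exp (- 2 * real n * (\<beta> - \<mu>)\<^sup>2)"
    using binomial_distribution.prob_ge'[of \<mu> n "\<beta> - \<mu>"] \<mu> n \<beta>
    by (simp add: binomial_distribution_def)
  finally show ?thesis .
qed

lemma prob_Pi_pmf_exists_count_ge_le:
  fixes M :: "'a pmf" and Q :: "'i \<Rightarrow> 'a \<Rightarrow> bool" and \<beta> :: "'i \<Rightarrow> real"
  assumes I: "finite I" and n: "0 < n" and \<delta>: "0 \<le> \<delta>"
    and gap: "\<And>i. i \<in> I \<Longrightarrow> measure_pmf.prob M {x. Q i x} + \<delta> \<le> \<beta> i"
  shows "measure_pmf.prob (Pi_pmf {..<n} d (\<lambda>_. M))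
           {P. \<exists>i \<in> I. \<beta> i * real n \<le> real (card {j \<in> {..<n}. Q i (P j)})}
         \<le> real (card I) * exp (- 2 * real n * \<delta>\<^sup>2)"
proof -
  let ?Pi = "Pi_pmf {..<n} d (\<lambda>_. M)"
  let ?E = "\<lambda>i. {P. \<beta> i * real n \<le> real (card {j \<in> {..<n}. Q i (P j)})}"
  have "measure_pmf.prob ?Pi {P. \<exists>i \<in> I. \<beta> i * real n \<le> real (card {j \<in> {..<n}. Q i (P j)})}
      = measure_pmf.prob ?Pi (\<Union>i\<in>I. ?E i)"
    by (rule arg_cong[where f = "measure_pmf.prob ?Pi"]) auto
  also have "\<dots> \<le> (\<Sum>i\<in>I. measure_pmf.prob ?Pi (?E i))"
    using I by (intro measure_pmf.finite_measure_subadditive_finite) auto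
  also have "\<dots> \<le> (\<Sum>i\<in>I. exp (- 2 * real n * \<delta>\<^sup>2))"
  proof (rule sum_mono)
    fix i assume "i \<in> I"
    let ?gap = "\<beta> i - measure_pmf.prob M {x. Q i x}"
    have "measure_pmf.prob ?Pi (?E i) \<le> exp (- 2 * real n * ?gap\<^sup>2)"
      using prob_Pi_pmf_count_ge_le[OF n, of M "Q i" "\<beta> i" d] gap[OF \<open>i \<in> I\<close>] \<delta> by simp
    also have "\<dots> \<le> exp (- 2 * real n * \<delta>\<^sup>2)"
      using gap[OF \<open>i \<in> I\<close>] \<delta> mult_left_mono[of "\<delta>\<^sup>2" "?gap\<^sup>2" "real n"] by (simp add: power_mono)
    finally show "measure_pmf.prob ?Pi (?E i) \<le> exp (- 2 * real n * \<delta>\<^sup>2)" .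
  qed
  finally show ?thesis
    by simp
qed

lemma prob_Pi_pmf_exists_count_ge_exp:
  fixes M :: "'a pmf" and Q :: "'i \<Rightarrow> 'a \<Rightarrow> bool" and \<beta> :: "'i \<Rightarrow> real"
  assumes I: "finite I" and less: "\<And>i. i \<in> I \<Longrightarrow> measure_pmf.prob M {x. Q i x} < \<beta> i"
  shows "\<exists>c>0. \<forall>\<^sub>F n in sequentially. measure_pmf.prob (Pi_pmf {..<n} d (\<lambda>_. M))
           {P. \<exists>i \<in> I. \<beta> i * real n \<le> real (card {j \<in> {..<n}. Q i (P j)})} \<le> exp (- c * real n)"
proof -
  define \<delta> where "\<delta> = Min (insert 1 ((\<lambda>i. \<beta> i - measure_pmf.prob M {x. Q i x}) ` I))"
  have "0 < \<delta>"
    using I less by (auto simp: \<delta>_def)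
  have \<delta>_gap: "measure_pmf.prob M {x. Q i x} + \<delta> \<le> \<beta> i" if "i \<in> I" for i
  proof -
    have "\<delta> \<le> \<beta> i - measure_pmf.prob M {x. Q i x}"
      unfolding \<delta>_def using I that by (intro Min_le) auto
    then show ?thesis
      by simp
  qed
  define c where "c = \<delta>\<^sup>2"
  have "0 < c"
    using \<open>0 < \<delta>\<close> by (simp add: c_def)
  then have "((\<lambda>n. real (card I) * exp (- c * real n)) \<longlongrightarrow> 0) sequentially"
    by real_asymp
  then have "\<forall>\<^sub>F n in sequentially. real (card I) * exp (- c * real n) < 1"
    by (rule order_tendstoD) simp
  then have "\<forall>\<^sub>F n in sequentially. measure_pmf.prob (Pi_pmf {..<n} d (\<lambda>_. M))
           {P. \<exists>i \<in> I. \<beta> i * real n \<le> real (card {j \<in> {..<n}. Q i (P j)})} \<le> exp (- c * real n)"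
    using eventually_gt_at_top[of 0]
  proof eventually_elim
    case (elim n)
    have "measure_pmf.prob (Pi_pmf {..<n} d (\<lambda>_. M))
        {P. \<exists>i \<in> I. \<beta> i * real n \<le> real (card {j \<in> {..<n}. Q i (P j)})}
        \<le> real (card I) * exp (- 2 * real n * \<delta>\<^sup>2)"
      by (rule prob_Pi_pmf_exists_count_ge_le[OF I elim(2)]) (use \<open>0 < \<delta>\<close> \<delta>_gap in auto)
    also have "\<dots> = (real (card I) * exp (- c * real n)) * exp (- c * real n)"
      by (simp add: c_def exp_add[symmetric] algebra_simps)
    also have "\<dots> \<le> exp (- c * real n)"
      using elim(1) by (simp add: mult_left_le_one_le less_imp_le)
    finally show ?case .
  qed
  with \<open>0 < c\<close> show ?thesis
    by blast
qed

lemma exp_decay_two_sided: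
  fixes f :: "nat \<Rightarrow> real"
  assumes "\<exists>c>0. \<forall>\<^sub>F n in sequentially. f n \<le> exp (- c * real n)"
    and "\<exists>c>0. \<forall>\<^sub>F n in sequentially. exp (- c * real n) \<le> f n"
  shows "\<exists>c1 c2. 0 < c1 \<and> 0 < c2 \<and>
           (\<forall>\<^sub>F n in sequentially. exp (- c2 * real n) \<le> f n \<and> f n \<le> exp (- c1 * real n))"
proof -
  obtain c1 c2 where "0 < c1" "\<forall>\<^sub>F n in sequentially. f n \<le> exp (- c1 * real n)"
    and "0 < c2" "\<forall>\<^sub>F n in sequentially. exp (- c2 * real n) \<le> f n"
    using assms by blast
  then show ?thesis
    using eventually_conj by blast
qed

section \<open>Impartial culture\<close>

lemma finite_alts [simp]: "finite (alts m)"
  by (simp add: alts_def)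

lemma map_pmf_image_permutes_IC:
  assumes "\<sigma> permutes alts m"
  shows "map_pmf ((`) \<sigma>) (IC p m) = IC p m"
proof -
  let ?Pi = "Pi_pmf (alts m) False (\<lambda>_. bernoulli_pmf p)"
  have inv: "inv \<sigma> permutes alts m"
    using assms by (rule permutes_inv)
  have image: "\<sigma> ` {a \<in> alts m. g a} = {a \<in> alts m. g (inv \<sigma> a)}" for g
  proof (intro set_eqI iffI)
    fix x assume "x \<in> {a \<in> alts m. g (inv \<sigma> a)}"
    then show "x \<in> \<sigma> ` {a \<in> alts m. g a}"
      using permutes_in_image[OF inv] permutes_inverses(1)[OF assms]
      by (auto intro!: image_eqI[of x \<sigma> "inv \<sigma> x"])
  qed (use assms in \<open>auto simp: permutes_in_image permutes_inverses(2)\<close>)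
  have "map_pmf ((`) \<sigma>) (IC p m)
      = map_pmf (\<lambda>g. {a \<in> alts m. g a}) (map_pmf (\<lambda>g. g \<circ> inv \<sigma>) ?Pi)"
    unfolding IC_def by (simp add: pmf.map_comp o_def image)
  also have "map_pmf (\<lambda>g. g \<circ> inv \<sigma>) ?Pi = ?Pi"
    using inv by (intro Pi_pmf_bij_betw[symmetric]) (auto simp: permutes_imp_bij permutes_not_in)
  finally show ?thesis
    unfolding IC_def .
qed

lemma prob_IC_image_permutes:
  assumes "\<sigma> permutes alts m"
  shows "measure_pmf.prob (IC p m) {A. \<sigma> ` A \<in> S} = measure_pmf.prob (IC p m) S"
  using arg_cong[OF map_pmf_image_permutes_IC[OF assms], of "\<lambda>M. measure_pmf.prob M S"]
  by (simp add: vimage_def)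

lemma prob_IC_EJR_witness_le:
  assumes W: "W \<subseteq> alts m" and a: "a \<in> alts m" "a \<notin> W"
  shows "measure_pmf.prob (IC p m) {A. a \<in> A \<and> card (A \<inter> W) < l}
         \<le> real l / real (card W + 1)"
proof -
  \<comment> \<open>Double counting: transpositions exchange the events \<open>E b\<close> for \<open>b \<in> U\<close>,
    and a ballot lies in at most \<open>l\<close> of them.\<close>
  define U where "U = insert a W"
  define E where "E b = {A. b \<in> A \<and> card (A \<inter> U) \<le> l}" for b
  have finW: "finite W"
    using W by (rule finite_subset) simp
  have E_a: "E a = {A. a \<in> A \<and> card (A \<inter> W) < l}"
    using a(2) finW by (auto simp: E_def U_def)
  have "finite U"
    using finW by (simp add: U_def)
  moreover have "measure_pmf.prob (IC p m) (E b) = measure_pmf.prob (IC p m) (E a)" if "b \<in> U" for b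
  proof -
    let ?\<sigma> = "Transposition.transpose a b"
    have "?\<sigma> permutes alts m"
      using that W a by (intro permutes_swap_id) (auto simp: U_def)
    moreover have "{A. ?\<sigma> ` A \<in> E b} = E a"
    proof -
      have "?\<sigma> ` U = U"
        using that by (intro transpose_image_eq) (auto simp: U_def)
      then have "card (?\<sigma> ` A \<inter> U) = card (A \<inter> U)" for A
        by (metis card_Int_image_inj inj_transpose)
      moreover have "b \<in> ?\<sigma> ` A \<longleftrightarrow> a \<in> A" for A
        by (simp only: in_transpose_image_iff transpose_apply_second)
      ultimately have "?\<sigma> ` A \<in> E b \<longleftrightarrow> A \<in> E a" for A
        unfolding E_def mem_Collect_eq by (simp only:)
      then show ?thesis
        by (intro set_eqI) (simp only: mem_Collect_eq)
    qed
    ultimately show ?thesis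
      by (metis prob_IC_image_permutes)
  qed
  moreover have "card {b \<in> U. A \<in> E b} \<le> l" for A
  proof (cases "card (A \<inter> U) \<le> l")
    case True
    moreover have "{b \<in> U. A \<in> E b} = A \<inter> U"
      using True by (auto simp: E_def)
    ultimately show ?thesis
      by simp
  next
    case False
    then have "{b \<in> U. A \<in> E b} = {}"
      by (auto simp: E_def)
    then show ?thesis
      by (simp only: card.empty le0)
  qed
  ultimately have "real (card U) * measure_pmf.prob (IC p m) (E a) \<le> real l"
    by (rule card_mult_prob_le_overlap)
  moreover have "card U = card W + 1"
    using finW a(2) by (simp add: U_def)
  ultimately show ?thesis
    unfolding E_a[symmetric] by (simp add: pos_le_divide_eq mult.commute)
qed

lemma exists_permutes_swapping_blocks:
  assumes J: "i0 \<in> J" "i \<in> J" and B: "\<And>j. j \<in> J \<Longrightarrow> B j \<subseteq> alts m"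
    and card_B: "\<And>j. j \<in> J \<Longrightarrow> card (B j) = s" and disj: "disjoint_family_on B J"
  obtains \<sigma> where "\<sigma> permutes alts m"
    "\<And>j. j \<in> J \<Longrightarrow> \<sigma> ` B j = B (Transposition.transpose i0 i j)"
proof (cases "i = i0")
  case True
  then show ?thesis
    by (intro that[of id]) (simp_all add: permutes_id)
next
  case False
  have fin: "finite (B j)" if "j \<in> J" for j
    using B[OF that] by (rule finite_subset) simp
  obtain \<sigma> where \<sigma>: "\<sigma> permutes B i0 \<union> B i" "\<sigma> ` B i0 = B i" "\<sigma> ` B i = B i0"
    using exists_permutes_swapping[of "B i0" "B i"] fin J card_B disj False
    by (metis disjoint_family_onD)
  have "\<sigma> ` B j = B (Transposition.transpose i0 i j)" if "j \<in> J" for j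
  proof (cases "j = i0 \<or> j = i")
    case False
    then have "B j \<inter> (B i0 \<union> B i) = {}"
      using disj that J by (auto dest: disjoint_family_onD)
    then have "\<forall>x \<in> B j. \<sigma> x = x"
      using permutes_not_in[OF \<sigma>(1)] by blast
    then have "\<sigma> ` B j = id ` B j"
      by (intro image_cong) auto
    then show ?thesis
      using False by simp
  qed (use \<sigma> in auto)
  moreover have "\<sigma> permutes alts m"
    using \<sigma>(1) by (rule permutes_subset) (use B J in auto)
  ultimately show ?thesis
    using that by blast
qed

lemma prob_IC_strict_winner_eq:
  assumes J: "i0 \<in> J" "i \<in> J" and B: "\<And>j. j \<in> J \<Longrightarrow> B j \<subseteq> alts m"
    and card_B: "\<And>j. j \<in> J \<Longrightarrow> card (B j) = s" and disj: "disjoint_family_on B J"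
  shows "measure_pmf.prob (IC p m) {A. strict_winner B J A i}
         = measure_pmf.prob (IC p m) {A. strict_winner B J A i0}"
proof -
  let ?\<tau> = "Transposition.transpose i0 i"
  obtain \<sigma> where \<sigma>: "\<sigma> permutes alts m" "\<And>j. j \<in> J \<Longrightarrow> \<sigma> ` B j = B (?\<tau> j)"
    using exists_permutes_swapping_blocks[OF J B card_B disj] by blast
  have "strict_winner B J (\<sigma> ` A) (?\<tau> i0) \<longleftrightarrow> strict_winner B J A i0" for A
    by (rule strict_winner_image_iff) (use \<sigma> J in \<open>auto intro: permutes_inj permutes_swap_id\<close>)
  then have "strict_winner B J (\<sigma> ` A) i \<longleftrightarrow> strict_winner B J A i0" for A
    by simp
  then show ?thesis
    using prob_IC_image_permutes[OF \<sigma>(1), of p "{A. strict_winner B J A i}"] by simp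
qed

lemma prob_IC_strict_winner_le:
  assumes J: "finite J" "i0 \<in> J" and B: "\<And>j. j \<in> J \<Longrightarrow> B j \<subseteq> alts m"
    and card_B: "\<And>j. j \<in> J \<Longrightarrow> card (B j) = s" and disj: "disjoint_family_on B J"
  shows "measure_pmf.prob (IC p m) {A. strict_winner B J A i0} \<le> 1 / real (card J)"
proof -
  have "measure_pmf.prob (IC p m) {A. strict_winner B J A i}
      = measure_pmf.prob (IC p m) {A. strict_winner B J A i0}" if "i \<in> J" for i
    by (rule prob_IC_strict_winner_eq[OF J(2) that B card_B disj])
  moreover have "card {i \<in> J. A \<in> {A. strict_winner B J A i}} \<le> 1" for A
    using J(1) strict_winner_unique[of B J A]
    by (subst One_nat_def, subst card_le_Suc0_iff_eq) auto
  ultimately have "real (card J) * measure_pmf.prob (IC p m) {A. strict_winner B J A i0} \<le> real 1"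
    by (rule card_mult_prob_le_overlap[OF J(1)])
  moreover have "0 < card J"
    using J card_gt_0_iff by blast
  ultimately show ?thesis
    by (simp add: pos_le_divide_eq mult.commute)
qed

lemma prob_IC_less_card_Int_disjoint_less:
  assumes D: "D \<subseteq> alts m" and E: "E \<subseteq> alts m" and DE: "D \<inter> E = {}"
    and s: "0 < card D" and sr: "card D \<le> card E"
  shows "measure_pmf.prob (IC p m) {A. card (A \<inter> E) < card (A \<inter> D)}
         < real (card D) / real (card E)"
proof -
  define s r where "s = card D" and "r = card E"
  define q where "q = r div s"
  have finE: "finite E"
    using E by (rule finite_subset) simp
  obtain C where C: "disjoint_family_on C {..<q}" "\<And>i. i < q \<Longrightarrow> C i \<subseteq> E \<and> card (C i) = s"
    using exists_disjoint_blocks[OF finE, of q s] by (auto simp: q_def r_def)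
  \<comment> \<open>A ballot preferring \<open>D\<close> to \<open>E\<close> makes \<open>D\<close> the strict winner among \<open>D\<close> and
    \<open>q\<close> disjoint blocks of \<open>E\<close> of the same size; by symmetry each of these
    \<open>q + 1\<close> blocks wins with the same probability.\<close>
  define B where "B j = (if j < q then C j else D)" for j
  have "B j \<subseteq> alts m" "card (B j) = s" if "j \<le> q" for j
    using C(2)[of j] D E by (auto simp: B_def s_def)
  moreover have "B i \<inter> B j = {}" if "i \<le> q" "j \<le> q" "i \<noteq> j" for i j
    using that C(1) C(2)[of i] C(2)[of j] DE
    by (cases "i < q"; cases "j < q") (auto simp: B_def dest: disjoint_family_onD)
  ultimately have "measure_pmf.prob (IC p m) {A. strict_winner B {..q} A q} \<le> 1 / real (card {..q})"
    by (intro prob_IC_strict_winner_le[where s = s]) (auto simp: disjoint_family_on_def)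
  moreover have "{A. card (A \<inter> E) < card (A \<inter> D)} \<subseteq> {A. strict_winner B {..q} A q}"
  proof (intro subsetI CollectI)
    fix A assume A: "A \<in> {A. card (A \<inter> E) < card (A \<inter> D)}"
    have "card (A \<inter> B j) < card (A \<inter> B q)" if "j \<in> {..q} - {q}" for j
    proof -
      have "card (A \<inter> C j) \<le> card (A \<inter> E)"
        using C(2)[of j] that finE by (intro card_mono) auto
      then show ?thesis
        using A that by (simp add: B_def)
    qed
    then show "strict_winner B {..q} A q"
      by (simp add: strict_winner_def)
  qed
  then have "measure_pmf.prob (IC p m) {A. card (A \<inter> E) < card (A \<inter> D)}
      \<le> measure_pmf.prob (IC p m) {A. strict_winner B {..q} A q}"
    by (rule measure_pmf.finite_measure_mono) simp
  ultimately have "measure_pmf.prob (IC p m) {A. card (A \<inter> E) < card (A \<inter> D)} \<le> 1 / real (q + 1)"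
    by simp
  also have "\<dots> < real s / real r"
    unfolding q_def using s sr by (intro one_div_Suc_div_less) (simp_all add: s_def r_def)
  finally show ?thesis
    by (simp add: s_def r_def)
qed

lemma prob_IC_CORE_witness_less:
  assumes W: "W \<subseteq> alts m" and W': "W' \<subseteq> alts m" "0 < card W'" "card W' \<le> card W"
  shows "measure_pmf.prob (IC p m) {A. card (A \<inter> W) < card (A \<inter> W')}
         < real (card W') / real (card W)"
proof -
  have fin: "finite W" "finite W'"
    using W W'(1) by (simp_all add: finite_subset)
  define c where "c = card (W \<inter> W')"
  have card_W: "card W = card (W - W') + c" and card_W': "card W' = card (W' - W) + c"
    using fin by (simp_all add: c_def card_Int_Diff[of W W'] card_Int_Diff[of W' W] Int_commute)
  show ?thesis
  proof (cases "W' - W = {}")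
    case True
    have "{A. card (A \<inter> W) < card (A \<inter> W')} = {}"
      using card_Int_less_iff_Diff[OF fin] by (simp add: True)
    then show ?thesis
      using W' by simp
  next
    case False
    have "measure_pmf.prob (IC p m) {A. card (A \<inter> W) < card (A \<inter> W')}
        = measure_pmf.prob (IC p m) {A. card (A \<inter> (W - W')) < card (A \<inter> (W' - W))}"
      using card_Int_less_iff_Diff[OF fin] by simp
    also have "\<dots> < real (card (W' - W)) / real (card (W - W'))"
      using False W W' fin card_W card_W' by (intro prob_IC_less_card_Int_disjoint_less) auto
    also have "\<dots> \<le> real (card W') / real (card W)"
    proof -
      have "0 < card (W' - W)"
        using False fin by (simp add: card_gt_0_iff)
      then have "0 < card (W - W')"
        using card_W card_W' W'(3) by linarith
      moreover have "real (card (W' - W)) * real c \<le> real (card (W - W')) * real c"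
        using card_W card_W' W'(3) by (intro mult_right_mono) simp_all
      ultimately show ?thesis
        unfolding card_W card_W' by (simp add: field_simps)
    qed
    finally show ?thesis .
  qed
qed

lemma pmf_IC_singleton_ge:
  assumes a: "a \<in> alts m" and p: "0 \<le> p" "p \<le> 1"
  shows "p * (1 - p) ^ (m - 1) \<le> pmf (IC p m) {a}"
proof -
  let ?Pi = "Pi_pmf (alts m) False (\<lambda>_. bernoulli_pmf p)"
  define X where "X x = (if x = a then {True} else {False})" for x
  have "measure_pmf.prob ?Pi (Pi (alts m) X) = (\<Prod>x\<in>alts m. if x = a then p else 1 - p)"
    using p by (simp add: measure_Pi_pmf_Pi X_def measure_pmf_single if_distrib cong: if_cong)
  also have "\<dots> = p * (\<Prod>x\<in>alts m - {a}. 1 - p)"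
    using a by (subst prod.remove[of _ a]) auto
  also have "\<dots> = p * (1 - p) ^ (m - 1)"
    using a by (simp add: alts_def)
  finally have "p * (1 - p) ^ (m - 1) = measure_pmf.prob ?Pi (Pi (alts m) X)" ..
  also have "\<dots> \<le> measure_pmf.prob ?Pi {f. {x \<in> alts m. f x} = {a}}"
    using a by (intro measure_pmf.finite_measure_mono) (auto simp: X_def Pi_def)
  also have "\<dots> = pmf (IC p m) {a}"
    by (simp add: IC_def pmf_map vimage_def)
  finally show ?thesis .
qed

lemma prob_profile_unanimous:
  "measure_pmf.prob (profile_pmf p m n) {P. \<forall>j<n. P j = A} = pmf (IC p m) A ^ n"
proof -
  have "{P. \<forall>j<n. P j = A} = Pi {..<n} (\<lambda>_. {A})"
    by (auto simp: Pi_def)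
  then show ?thesis
    by (simp add: profile_pmf_def measure_Pi_pmf_Pi measure_pmf_single)
qed

lemma profile_failure_prob_exp_lower:
  assumes m: "0 < m" and p: "0 < p" "p < 1"
    and unanimous: "\<And>n P. 0 < n \<Longrightarrow> \<forall>j<n. P j = {1} \<Longrightarrow> \<not> G n P"
  shows "\<exists>c>0. \<forall>\<^sub>F n in sequentially.
           exp (- c * real n) \<le> 1 - measure_pmf.prob (profile_pmf p m n) {P. G n P}"
proof -
  define q where "q = p * (1 - p) ^ (m - 1)"
  have q: "0 < q" "q < 1"
    using p by (auto simp: q_def intro!: mult_le_one power_le_one le_less_trans[of _ p 1])
  have "exp (- (- ln q) * real n) \<le> 1 - measure_pmf.prob (profile_pmf p m n) {P. G n P}" if "0 < n" for n
  proof -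
    have "exp (- (- ln q) * real n) = exp (real n * ln q)"
      by (simp add: mult.commute)
    also have "\<dots> = q ^ n"
      using q by (simp only: exp_of_nat_mult exp_ln)
    also have "\<dots> \<le> pmf (IC p m) {1} ^ n"
      using q m p pmf_IC_singleton_ge[of 1 m p] by (intro power_mono) (auto simp: q_def alts_def)
    also have "\<dots> = measure_pmf.prob (profile_pmf p m n) {P. \<forall>j<n. P j = {1}}"
      by (rule prob_profile_unanimous[symmetric])
    also have "\<dots> \<le> measure_pmf.prob (profile_pmf p m n) (UNIV - {P. G n P})"
      using unanimous[OF that] by (intro measure_pmf.finite_measure_mono) auto
    also have "\<dots> = 1 - measure_pmf.prob (profile_pmf p m n) {P. G n P}"
      using measure_pmf.prob_compl[of "{P. G n P}" "profile_pmf p m n"] by simp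
    finally show ?thesis .
  qed
  moreover have "0 < - ln q"
    using q by simp
  ultimately show ?thesis
    using eventually_gt_at_top[of 0] by (blast intro: eventually_mono)
qed

lemma profile_failure_prob_exp_upper:
  fixes Q :: "'i \<Rightarrow> nat set \<Rightarrow> bool" and \<beta> :: "'i \<Rightarrow> real"
  assumes "finite I" and "\<And>i. i \<in> I \<Longrightarrow> measure_pmf.prob (IC p m) {A. Q i A} < \<beta> i"
    and witness: "\<And>n P. 0 < n \<Longrightarrow> \<not> G n P \<Longrightarrow>
                   \<exists>i \<in> I. \<beta> i * real n \<le> real (card {j \<in> {..<n}. Q i (P j)})"
  shows "\<exists>c>0. \<forall>\<^sub>F n in sequentially.
           1 - measure_pmf.prob (profile_pmf p m n) {P. G n P} \<le> exp (- c * real n)"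
proof -
  have "\<exists>c>0. \<forall>\<^sub>F n in sequentially. measure_pmf.prob (profile_pmf p m n)
      {P. \<exists>i \<in> I. \<beta> i * real n \<le> real (card {j \<in> {..<n}. Q i (P j)})} \<le> exp (- c * real n)"
    unfolding profile_pmf_def by (rule prob_Pi_pmf_exists_count_ge_exp) (use assms in auto)
  then obtain c where "0 < c" and bound: "\<forall>\<^sub>F n in sequentially. measure_pmf.prob (profile_pmf p m n)
      {P. \<exists>i \<in> I. \<beta> i * real n \<le> real (card {j \<in> {..<n}. Q i (P j)})} \<le> exp (- c * real n)"
    by blast
  have "\<forall>\<^sub>F n in sequentially. 1 - measure_pmf.prob (profile_pmf p m n) {P. G n P} \<le> exp (- c * real n)"
    using bound eventually_gt_at_top[of 0]
  proof eventually_elim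
    case (elim n)
    have "1 - measure_pmf.prob (profile_pmf p m n) {P. G n P}
        = measure_pmf.prob (profile_pmf p m n) (UNIV - {P. G n P})"
      using measure_pmf.prob_compl[of "{P. G n P}" "profile_pmf p m n"] by simp
    also have "\<dots> \<le> measure_pmf.prob (profile_pmf p m n)
        {P. \<exists>i \<in> I. \<beta> i * real n \<le> real (card {j \<in> {..<n}. Q i (P j)})}"
      using witness[OF elim(2)] by (intro measure_pmf.finite_measure_mono) auto
    finally show ?case
      using elim(1) by linarith
  qed
  with \<open>0 < c\<close> show ?thesis
    by blast
qed

section \<open>CORE and EJR+\<close>

lemma finite_committees: "finite (committees m k)"
  unfolding committees_def by (rule finite_subset[of _ "Pow (alts m)"]) auto

lemma CORE_failure_witness:
  assumes n: "0 < n" and k: "0 < k" and fail: "CORE m k n P \<noteq> committees m k"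
  shows "\<exists>W \<in> committees m k. \<exists>W'. W' \<subseteq> alts m \<and> 0 < card W' \<and> card W' \<le> k \<and>
           real (card W') / real k * real n
             \<le> real (card {j \<in> {..<n}. card (P j \<inter> W) < card (P j \<inter> W')})"
proof -
  obtain W where W: "W \<in> committees m k" "W \<notin> CORE m k n P"
    using fail unfolding CORE_def by blast
  then obtain N' W' where N': "N' \<subseteq> {..<n}" "N' \<noteq> {}" and W': "W' \<subseteq> alts m"
      and ratio: "real (card W') / real k \<le> real (card N') / real n"
      and blocking: "\<forall>j \<in> N'. card (P j \<inter> W) < card (P j \<inter> W')"
    unfolding CORE_def by (auto simp: not_le)
  obtain j where j: "j \<in> N'"
    using N'(2) by blast
  have "0 < card (P j \<inter> W')"
    using blocking j by (metis less_nat_zero_code neq0_conv)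
  also have "card (P j \<inter> W') \<le> card W'"
    using W' by (intro card_mono) (auto intro: finite_subset)
  finally have "0 < card W'" .
  have "card N' \<le> n"
    using card_mono[OF _ N'(1)] by simp
  then have "real (card N') / real n \<le> 1"
    using n by simp
  then have "real (card W') / real k \<le> 1"
    using ratio by linarith
  then have "card W' \<le> k"
    using k by (simp add: divide_le_eq_1)
  have "card N' \<le> card {j \<in> {..<n}. card (P j \<inter> W) < card (P j \<inter> W')}"
    using N'(1) blocking by (intro card_mono) auto
  moreover have "real (card W') / real k * real n \<le> real (card N')"
    using ratio n by (simp add: field_simps)
  ultimately show ?thesis
    using W(1) W' \<open>0 < card W'\<close> \<open>card W' \<le> k\<close> by (intro bexI[OF _ W(1)] exI[of _ W']) auto
qed

lemma CORE_failure_prob_exp_upper: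
  assumes "0 < k"
  shows "\<exists>c>0. \<forall>\<^sub>F n in sequentially.
           1 - measure_pmf.prob (profile_pmf p m n) {P. CORE m k n P = committees m k} \<le> exp (- c * real n)"
proof (rule profile_failure_prob_exp_upper)
  let ?I = "{(W, W'). W \<in> committees m k \<and> W' \<subseteq> alts m \<and> 0 < card W' \<and> card W' \<le> k}"
  show "finite ?I"
    by (rule finite_subset[of _ "committees m k \<times> Pow (alts m)"]) (auto simp: finite_committees)
  show "measure_pmf.prob (IC p m) {A. card (A \<inter> fst i) < card (A \<inter> snd i)}
      < real (card (snd i)) / real k" if "i \<in> ?I" for i
    using that prob_IC_CORE_witness_less[of "fst i" m "snd i" p] by (auto simp: committees_def)
  show "\<exists>i \<in> ?I. real (card (snd i)) / real k * real n
      \<le> real (card {j \<in> {..<n}. card (P j \<inter> fst i) < card (P j \<inter> snd i)})"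
    if "0 < n" "CORE m k n P \<noteq> committees m k" for n P
    using CORE_failure_witness[OF that(1) assms that(2)] by auto
qed

lemma EJR_plus_failure_witness:
  assumes n: "0 < n" and k: "0 < k" and fail: "EJR_plus m k n P \<noteq> committees m k"
  shows "\<exists>W \<in> committees m k. \<exists>a \<in> alts m - W. \<exists>l. 0 < l \<and> l \<le> k \<and>
           real l / real k * real n \<le> real (card {j \<in> {..<n}. a \<in> P j \<and> card (P j \<inter> W) < l})"
proof -
  obtain W where W: "W \<in> committees m k" "W \<notin> EJR_plus m k n P"
    using fail unfolding EJR_plus_def by blast
  then obtain a l N' where a: "a \<in> alts m - W" and l: "1 \<le> l" and N': "N' \<subseteq> {..<n}"
      and large: "real l * real n / real k \<le> real (card N')"
      and cohesive: "\<forall>j \<in> N'. a \<in> P j \<and> card (P j \<inter> W) < l"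
    unfolding EJR_plus_def by auto
  have large': "real l / real k * real n \<le> real (card N')"
    using large by simp
  have "card N' \<le> n"
    using card_mono[OF _ N'] by simp
  then have "real l / real k * real n \<le> 1 * real n"
    using large' by linarith
  then have "real l / real k \<le> 1"
    using n by (metis mult_le_cancel_right_pos of_nat_0_less_iff)
  then have "l \<le> k"
    using k by (simp add: divide_le_eq_1)
  have "card N' \<le> card {j \<in> {..<n}. a \<in> P j \<and> card (P j \<inter> W) < l}"
    using N' cohesive by (intro card_mono) auto
  then show ?thesis
    using W(1) a l large' \<open>l \<le> k\<close> by (intro bexI[OF _ W(1)] bexI[OF _ a] exI[of _ l]) auto
qed

lemma EJR_plus_failure_prob_exp_upper:
  assumes "0 < k"
  shows "\<exists>c>0. \<forall>\<^sub>F n in sequentially.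
           1 - measure_pmf.prob (profile_pmf p m n) {P. EJR_plus m k n P = committees m k} \<le> exp (- c * real n)"
proof (rule profile_failure_prob_exp_upper)
  let ?I = "{(W, a, l). W \<in> committees m k \<and> a \<in> alts m - W \<and> 0 < l \<and> l \<le> k}"
  show "finite ?I"
    by (rule finite_subset[of _ "committees m k \<times> alts m \<times> {..k}"]) (auto simp: finite_committees)
  show "measure_pmf.prob (IC p m) {A. fst (snd i) \<in> A \<and> card (A \<inter> fst i) < snd (snd i)}
      < real (snd (snd i)) / real k" if "i \<in> ?I" for i
  proof -
    obtain W a l where i: "i = (W, a, l)" and W: "W \<in> committees m k" and a: "a \<in> alts m - W"
        and l: "0 < l"
      using \<open>i \<in> ?I\<close> by auto
    have "measure_pmf.prob (IC p m) {A. a \<in> A \<and> card (A \<inter> W) < l} \<le> real l / real (k + 1)"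
      using prob_IC_EJR_witness_le[of W m a p l] W a by (simp add: committees_def)
    also have "\<dots> < real l / real k"
      using l assms by (intro divide_strict_left_mono) auto
    finally show ?thesis
      by (simp add: i)
  qed
  show "\<exists>i \<in> ?I. real (snd (snd i)) / real k * real n
      \<le> real (card {j \<in> {..<n}. fst (snd i) \<in> P j \<and> card (P j \<inter> fst i) < snd (snd i)})"
    if "0 < n" "EJR_plus m k n P \<noteq> committees m k" for n P
    using EJR_plus_failure_witness[OF that(1) assms that(2)] by fastforce
qed

lemma unanimous_not_CORE:
  assumes k: "0 < k" "k < m" and n: "0 < n" and P: "\<forall>j<n. P j = {1}"
  shows "CORE m k n P \<noteq> committees m k"
proof -
  have "{2..k+1} \<notin> CORE m k n P"
  proof
    assume "{2..k+1} \<in> CORE m k n P"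
    moreover have "{1} \<subseteq> alts m"
      using k by (simp add: alts_def)
    moreover have "real (card {1::nat}) / real k \<le> real (card {..<n}) / real n"
      using k n by simp
    ultimately have "\<exists>j\<in>{..<n}. card (P j \<inter> {1}) \<le> card (P j \<inter> {2..k+1})"
      using n unfolding CORE_def by blast
    then show False
      using P by auto
  qed
  moreover have "{2..k+1} \<in> committees m k"
    using k by (auto simp: committees_def alts_def)
  ultimately show ?thesis
    by blast
qed

lemma unanimous_not_EJR_plus:
  assumes k: "0 < k" "k < m" and n: "0 < n" and P: "\<forall>j<n. P j = {1}"
  shows "EJR_plus m k n P \<noteq> committees m k"
proof -
  have "{2..k+1} \<notin> EJR_plus m k n P"
  proof
    assume "{2..k+1} \<in> EJR_plus m k n P"
    moreover have "(1::nat) \<in> alts m - {2..k+1}"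
      using k by (simp add: alts_def)
    moreover have "real 1 * real n / real k \<le> real (card {..<n})"
      using k n by (simp add: field_simps)
    moreover have "\<forall>j\<in>{..<n}. 1 \<in> P j \<and> card (P j \<inter> {2..k+1}) < 1"
      using P by auto
    ultimately show False
      unfolding EJR_plus_def by blast
  qed
  moreover have "{2..k+1} \<in> committees m k"
    using k by (auto simp: committees_def alts_def)
  ultimately show ?thesis
    by blast
qed

theorem corollary3:
  fixes m k :: nat and p :: real
  assumes "1 \<le> k" and "k < m" and "0 < p" and "p < 1"
  shows "(\<exists>c1 c2. 0 < c1 \<and> 0 < c2 \<and> (\<forall>\<^sub>F n in sequentially.
            exp (- c2 * real n) \<le> 1 - measure_pmf.prob (profile_pmf p m n) {P. CORE m k n P = committees m k}
          \<and> 1 - measure_pmf.prob (profile_pmf p m n) {P. CORE m k n P = committees m k} \<le> exp (- c1 * real n)))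
       \<and> (\<exists>c1 c2. 0 < c1 \<and> 0 < c2 \<and> (\<forall>\<^sub>F n in sequentially.
            exp (- c2 * real n) \<le> 1 - measure_pmf.prob (profile_pmf p m n) {P. EJR_plus m k n P = committees m k}
          \<and> 1 - measure_pmf.prob (profile_pmf p m n) {P. EJR_plus m k n P = committees m k} \<le> exp (- c1 * real n)))"
proof -
  have k: "0 < k" and m: "0 < m"
    using assms(1,2) by simp_all
  show ?thesis
    using exp_decay_two_sided[OF CORE_failure_prob_exp_upper[OF k]
        profile_failure_prob_exp_lower[OF m assms(3,4) unanimous_not_CORE[OF k assms(2)]]]
      exp_decay_two_sided[OF EJR_plus_failure_prob_exp_upper[OF k]
        profile_failure_prob_exp_lower[OF m assms(3,4) unanimous_not_EJR_plus[OF k assms(2)]]]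
    by (intro conjI)
qed

end
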